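(* Let $k,n$ be positive integers with $k\leqslant n$, and let $X\subseteq [n]^k_<$ have the quasi-exchange property. Then every linear extension of $X$ (with respect to the Bruhat order) is a shelling order.
   Context: $[n]:=\{1,\ldots,n\}$. $[n]^k_<$ denotes the set of $k$-element subsets of $[n]$, each identified with the increasing tuple $x=(x_1<\cdots<x_k)$ of its elements (so set operations $\cap,\cup,\setminus$ and the symmetric difference $A+B:=(A\setminus B)\cup(B\setminus A)$ make sense). A subset $X\subseteq[n]^k_<$ is viewed as (the set of facets of) a pure $(k-1)$-dimensional simplicial complex. The Bruhat order on $[n]^k_<$ is: $x\leqslant y$ iff $x_i\leqslant y_i$ for all $i\in[k]$. $\mathrm{Conf}([n]^k_<)$ is the set of finite tuples $C=(C_1,\ldots,C_h)$, $h\geqslant 1$, of pairwise distinct elements of $[n]^k_<$. A linear extension of $X$ is a tuple $L=(L_1,\ldots,L_h)$ listing every element of $X$ exactly once such that $L_i<L_j$ in the Bruhat order implies $i<j$. A tuple $C=(C_1,\ldots,C_h)\in\mathrm{Conf}([n]^k_<)$ is a shelling order if for all $i<j$ in $[h]$ there exists $z<j$ with $|C_z\cap C_j|=k-1$ and $C_i\cap C_j\subseteq C_z\cap C_j$. $X$ has the quasi-exchange property if for all $x,y\in X$ and every $i\in x\setminus y$ with $i>\max(y\setminus x)$, there exists $j\in y\setminus x$ such that $x+\{i,j\}\in X$. *)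

theory Defs
  imports Main
begin

text \<open>k-element subsets of [n] = {1..n}; the increasing tuple of A is sorted_list_of_set A.\<close>
definition ksubsets :: "nat \<Rightarrow> nat \<Rightarrow> nat set set" where
  "ksubsets n k = {A. A \<subseteq> {1..n} \<and> card A = k}"

definition bruhat_le :: "nat set \<Rightarrow> nat set \<Rightarrow> bool" where
  "bruhat_le x y \<longleftrightarrow> card x = card y \<and>
     (\<forall>i < card x. sorted_list_of_set x ! i \<le> sorted_list_of_set y ! i)"

definition bruhat_less :: "nat set \<Rightarrow> nat set \<Rightarrow> bool" where
  "bruhat_less x y \<longleftrightarrow> bruhat_le x y \<and> x \<noteq> y"

definition Conf :: "nat \<Rightarrow> nat \<Rightarrow> nat set list set" where
  "Conf n k = {C. C \<noteq> [] \<and> distinct C \<and> set C \<subseteq> ksubsets n k}"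

definition linear_extension :: "nat set set \<Rightarrow> nat set list \<Rightarrow> bool" where
  "linear_extension X L \<longleftrightarrow> distinct L \<and> set L = X \<and>
     (\<forall>i < length L. \<forall>j < length L. bruhat_less (L ! i) (L ! j) \<longrightarrow> i < j)"

definition shelling_order :: "nat \<Rightarrow> nat \<Rightarrow> nat set list \<Rightarrow> bool" where
  "shelling_order n k C \<longleftrightarrow> C \<in> Conf n k \<and>
     (\<forall>i j. i < j \<and> j < length C \<longrightarrow>
        (\<exists>z < j. card (C ! z \<inter> C ! j) = k - 1 \<and> C ! i \<inter> C ! j \<subseteq> C ! z \<inter> C ! j))"

definition sym_diff :: "'a set \<Rightarrow> 'a set \<Rightarrow> 'a set" where
  "sym_diff A B = (A - B) \<union> (B - A)"

text \<open>When y \<setminus> x is empty, the condition i > max(y\<setminus>x) is read as vacuously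
  true (max of empty set = -\<infinity>); for equal-size sets this case never arises with i \<in> x \<setminus> y anyway.\<close>
definition quasi_exchange :: "nat set set \<Rightarrow> bool" where
  "quasi_exchange X \<longleftrightarrow> (\<forall>x\<in>X. \<forall>y\<in>X. \<forall>i \<in> x - y.
      (\<forall>m \<in> y - x. m < i) \<longrightarrow> (\<exists>j \<in> y - x. sym_diff x {i, j} \<in> X))"

end

theory Submission
  imports Defs
begin

text \<open>
  Fix a face y of the linear extension and let x be an earlier face. Let m be the largest element
  of the symmetric difference of x and y. If m \<in> y, quasi-exchange in y replaces m by an element
  of x and gives a Bruhat-smaller face, hence an earlier one, that meets y in y - {m} \<supseteq> x \<inter> y.
  If m \<in> x, quasi-exchange in x replaces m by an element of y and gives a Bruhat-smaller, hence
  earlier, face x' with x \<inter> y \<subseteq> x' \<inter> y and one element fewer outside y; conclude by induction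
  on |x - y| (if x' = y, then x itself is adjacent to y). That replacing an element by a smaller
  one goes down in the Bruhat order is seen by counting: the i-th smallest element of A is at most
  u iff more than i elements of A are at most u.
\<close>

lemma card_less_sorted_list_of_set_nth:
  assumes "finite B" "i < card B"
  shows "card {v\<in>B. v < sorted_list_of_set B ! i} = i"
proof -
  let ?t = "sorted_list_of_set B"
  have sorted: "sorted_wrt (<) ?t" by (rule strict_sorted_list_of_set)
  have "{v\<in>B. v < ?t ! i} = set (take i ?t)"
  proof (intro set_eqI iffI)
    fix v assume "v \<in> {v\<in>B. v < ?t ! i}"
    then obtain m where "m < card B" "v = ?t ! m" "?t ! m < ?t ! i"
      using assms(1) by (metis (no_types, lifting) in_set_conv_nth length_sorted_list_of_set mem_Collect_eq set_sorted_list_of_set)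
    moreover have "m < i"
      using calculation sorted assms by (metis linorder_neqE_nat not_less_iff_gr_or_eq length_sorted_list_of_set sorted_wrt_nth_less)
    ultimately show "v \<in> set (take i ?t)"
      by (metis in_set_conv_nth length_take min_less_iff_conj nth_take length_sorted_list_of_set)
  next
    fix v assume v: "v \<in> set (take i ?t)"
    then have "v \<in> B"
      using assms(1) by (auto dest: in_set_takeD)
    moreover obtain m where "m < i" "v = ?t ! m"
      using v assms by (auto simp: in_set_conv_nth)
    ultimately show "v \<in> {v\<in>B. v < ?t ! i}"
      using sorted assms by (auto simp: sorted_wrt_nth_less)
  qed
  then show ?thesis
    using assms by (simp add: distinct_card)
qed

lemma sorted_list_of_set_nth_le_iff:
  assumes "finite B" "i < card B"
  shows "sorted_list_of_set B ! i \<le> u \<longleftrightarrow> i < card {v\<in>B. v \<le> u}"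
proof
  let ?b = "sorted_list_of_set B ! i"
  assume "?b \<le> u"
  moreover have "?b \<in> B"
    using assms by (metis length_sorted_list_of_set nth_mem set_sorted_list_of_set)
  ultimately have "insert ?b {v\<in>B. v < ?b} \<subseteq> {v\<in>B. v \<le> u}"
    by auto
  then have "card (insert ?b {v\<in>B. v < ?b}) \<le> card {v\<in>B. v \<le> u}"
    using assms(1) by (intro card_mono) auto
  then show "i < card {v\<in>B. v \<le> u}"
    using card_less_sorted_list_of_set_nth[OF assms] assms(1) by simp
next
  let ?b = "sorted_list_of_set B ! i"
  assume count: "i < card {v\<in>B. v \<le> u}"
  show "?b \<le> u"
  proof (rule ccontr)
    assume "\<not> ?b \<le> u"
    then have "card {v\<in>B. v \<le> u} \<le> card {v\<in>B. v < ?b}"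
      using assms(1) by (intro card_mono) auto
    then show False
      using count card_less_sorted_list_of_set_nth[OF assms] by simp
  qed
qed

lemma bruhat_le_if_card_le:
  assumes "finite A" "finite B" "card A = card B"
    and "\<And>u. card {v\<in>B. v \<le> u} \<le> card {v\<in>A. v \<le> u}"
  shows "bruhat_le A B"
  unfolding bruhat_le_def
proof (intro conjI allI impI)
  fix i assume i: "i < card A"
  let ?b = "sorted_list_of_set B ! i"
  have "i < card {v\<in>B. v \<le> ?b}"
    using sorted_list_of_set_nth_le_iff[OF assms(2), of i ?b] i assms(3) by simp
  also have "\<dots> \<le> card {v\<in>A. v \<le> ?b}"
    by (rule assms(4))
  finally show "sorted_list_of_set A ! i \<le> ?b"
    using sorted_list_of_set_nth_le_iff[OF assms(1) i] by simp
qed (fact assms(3))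

lemma bruhat_less_exchange_smaller:
  assumes "finite A" "a \<in> A" "b \<notin> A" "b < a"
  shows "bruhat_less (insert b (A - {a})) A"
proof -
  let ?A' = "insert b (A - {a})"
  have "card {v\<in>A. v \<le> u} \<le> card {v\<in>?A'. v \<le> u}" for u
  proof -
    have "inj_on (\<lambda>v. if v = a then b else v) {v\<in>A. v \<le> u}"
      using assms by (auto simp: inj_on_def)
    moreover have "(\<lambda>v. if v = a then b else v) ` {v\<in>A. v \<le> u} \<subseteq> {v\<in>?A'. v \<le> u}"
      using assms by auto
    ultimately show ?thesis
      using assms(1) by (intro card_inj_on_le) auto
  qed
  moreover have "card ?A' = card A"
    using assms by (metis DiffE card_Suc_Diff1 card_insert_disjoint finite_Diff)
  ultimately have "bruhat_le ?A' A"
    using assms(1) by (intro bruhat_le_if_card_le) auto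
  moreover have "?A' \<noteq> A"
    using assms by auto
  ultimately show ?thesis
    unfolding bruhat_less_def by simp
qed

lemma quasi_exchange_lower_neighbour:
  assumes "quasi_exchange X" "x \<in> X" "y \<in> X" "finite x"
    and "i \<in> x - y" "\<forall>m\<in>y - x. m < i"
  shows "\<exists>j\<in>y - x. insert j (x - {i}) \<in> X \<and> bruhat_less (insert j (x - {i})) x"
proof -
  obtain j where j: "j \<in> y - x" "sym_diff x {i, j} \<in> X"
    using assms unfolding quasi_exchange_def by blast
  moreover have "sym_diff x {i, j} = insert j (x - {i})"
    using assms(5) j(1) unfolding sym_diff_def by auto
  moreover have "bruhat_less (insert j (x - {i})) x"
    using assms(4-6) j(1) by (intro bruhat_less_exchange_smaller) auto
  ultimately show ?thesis
    by auto
qed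

lemma max_symmetric_difference_cases:
  fixes x y :: "'a::linorder set"
  assumes "finite x" "finite y" "x \<noteq> y"
  obtains (in_right) m where "m \<in> y - x" "\<forall>v\<in>x - y. v < m"
    | (in_left) m where "m \<in> x - y" "\<forall>v\<in>y - x. v < m"
proof -
  let ?D = "x - y \<union> (y - x)"
  have "finite ?D"
    using assms(1,2) by (intro finite_UnI finite_Diff)
  moreover have "?D \<noteq> {}"
    using assms(3) by auto
  ultimately show ?thesis
    using that Max_in[of ?D] Max_ge[of ?D] by (metis Diff_iff Un_iff order.not_eq_order_implies_strict)
qed

lemma quasi_exchange_shelling_witness:
  assumes k_sets: "\<And>w. w \<in> X \<Longrightarrow> finite w \<and> card w = k"
    and qe: "quasi_exchange X" and "y \<in> X" "P \<subseteq> X"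
    and down_closed: "\<And>v w. v \<in> insert y P \<Longrightarrow> w \<in> X \<Longrightarrow> bruhat_less w v \<Longrightarrow> w \<in> P"
    and "x \<in> P" "x \<noteq> y"
  shows "\<exists>z\<in>P. card (z \<inter> y) = k - 1 \<and> x \<inter> y \<subseteq> z \<inter> y"
  using \<open>x \<in> P\<close> \<open>x \<noteq> y\<close>
proof (induction "card (x - y)" arbitrary: x rule: less_induct)
  case less
  have "x \<in> X" using less.prems \<open>P \<subseteq> X\<close> by blast
  then have fin: "finite x" "finite y" and card_eq: "card x = k" "card y = k"
    using k_sets \<open>y \<in> X\<close> by auto
  from fin \<open>x \<noteq> y\<close> show ?case
  proof (cases rule: max_symmetric_difference_cases)
    case (in_right m)
    then obtain b where b: "b \<in> x - y" "insert b (y - {m}) \<in> X" "bruhat_less (insert b (y - {m})) y"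
      using quasi_exchange_lower_neighbour[OF qe \<open>y \<in> X\<close> \<open>x \<in> X\<close> fin(2)] by blast
    then have "insert b (y - {m}) \<in> P"
      using down_closed by blast
    moreover have "insert b (y - {m}) \<inter> y = y - {m}"
      using b by auto
    moreover have "card (y - {m}) = k - 1"
      using in_right fin card_eq by simp
    moreover have "x \<inter> y \<subseteq> y - {m}"
      using in_right by auto
    ultimately show ?thesis
      by metis
  next
    case (in_left m)
    then obtain j where j: "j \<in> y - x" and x': "insert j (x - {m}) \<in> X" "bruhat_less (insert j (x - {m})) x"
      using quasi_exchange_lower_neighbour[OF qe \<open>x \<in> X\<close> \<open>y \<in> X\<close> fin(1)] by blast
    define x' where "x' = insert j (x - {m})"
    have "x' \<in> P"
      using down_closed less.prems x' unfolding x'_def by blast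
    show ?thesis
    proof (cases "x' = y")
      case True
      then have "x \<inter> y = x - {m}"
        using in_left j unfolding x'_def by auto
      then have "card (x \<inter> y) = k - 1"
        using in_left fin card_eq by simp
      then show ?thesis
        using less.prems(1) by blast
    next
      case False
      have "x' - y = (x - y) - {m}"
        using in_left j unfolding x'_def by auto
      then have "card (x' - y) < card (x - y)"
        using in_left fin by (metis card_Diff1_less finite_Diff Diff_iff)
      then obtain z where "z \<in> P" "card (z \<inter> y) = k - 1" "x' \<inter> y \<subseteq> z \<inter> y"
        using less.hyps \<open>x' \<in> P\<close> False by blast
      moreover have "x \<inter> y \<subseteq> x' \<inter> y"
        using in_left unfolding x'_def by auto
      ultimately show ?thesis
        by blast
    qed
  qed
qed

lemma linear_extension_prefix_down_closed:
  assumes "linear_extension X L" "j < length L"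
    and "v \<in> insert (L ! j) ((!) L ` {..<j})" "w \<in> X" "bruhat_less w v"
  shows "w \<in> (!) L ` {..<j}"
proof -
  obtain r where r: "r \<le> j" "v = L ! r"
    using assms(3) by (meson imageE insertE lessThan_iff less_imp_le order_refl)
  obtain q where q: "q < length L" "w = L ! q"
    using assms(1,4) unfolding linear_extension_def by (metis in_set_conv_nth)
  have "q < r"
    using assms(1,2,5) q r unfolding linear_extension_def by auto
  then show ?thesis
    using q r by auto
qed

theorem theorem3p4:
  fixes n k :: nat and X :: "nat set set" and L :: "nat set list"
  assumes "0 < k" and "k \<le> n"
    and "X \<subseteq> ksubsets n k"
    and "quasi_exchange X"
    and "linear_extension X L"
    and "L \<noteq> []"
  shows "shelling_order n k L"
proof -
  have k_sets: "finite w \<and> card w = k" if "w \<in> X" for w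
    using that assms(3) finite_subset[of w "{1..n}"] unfolding ksubsets_def by blast
  have distinct: "distinct L" and set_L: "set L = X"
    using assms(5) unfolding linear_extension_def by auto
  have "\<exists>z < j. card (L ! z \<inter> L ! j) = k - 1 \<and> L ! i \<inter> L ! j \<subseteq> L ! z \<inter> L ! j"
    if ij: "i < j" "j < length L" for i j
  proof -
    have y: "L ! j \<in> X" and prefix: "(!) L ` {..<j} \<subseteq> X"
      using ij set_L by auto
    have x: "L ! i \<in> (!) L ` {..<j}" and x_ne_y: "L ! i \<noteq> L ! j"
      using ij distinct by (auto simp: nth_eq_iff_index_eq)
    have "\<exists>z\<in>(!) L ` {..<j}. card (z \<inter> L ! j) = k - 1 \<and> L ! i \<inter> L ! j \<subseteq> z \<inter> L ! j"
      by (rule quasi_exchange_shelling_witness[OF k_sets assms(4) y prefix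
            linear_extension_prefix_down_closed[OF assms(5) ij(2)] x x_ne_y])
    then show ?thesis
      by blast
  qed
  moreover have "L \<in> Conf n k"
    unfolding Conf_def using assms(3,6) distinct set_L by simp
  ultimately show ?thesis
    unfolding shelling_order_def by blast
qed

end
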